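(* Let $U$ be the set of pairs $(p,q)\in\mathbb D^2\times\mathbb D^2$ with $p=(p_1,p_2)$, $q=(q_1,q_2)$ satisfying $|p_2|<|p_1|$, $|q_2|<|q_1|$ and $m\!\left(p_2/p_1,\,q_2/q_1\right)<m(p_1,q_1)$, and let $\sigma(p,q):=((p_2,p_1),(q_2,q_1))$. Then for every $(p,q)\in U\cup\sigma(U)$ with $p\ne q$ we have $c(p,q)=l(p,q)$; more precisely, for $(p,q)\in U$ both equal $\log|p_1q_1|$.
   Context: $\mathbb D$ is the open unit disc; $m(\lambda_1,\lambda_2):=\left|\frac{\lambda_1-\lambda_2}{1-\bar\lambda_1\lambda_2}\right|$ is the Möbius distance on $\mathbb D$. For distinct $p,q\in\mathbb D^2$, $c(p,q):=c_{\mathbb D^2}((0,0);p,q)$ and $l(p,q):=l_{\mathbb D^2}((0,0);p,q)$, where for a domain $D$, $z\in D$ and distinct poles $p_1,\dots,p_N\in D$: $l_D(z;p_1,\dots,p_N)$ is the infimum of $\sum_j\log|\lambda_j|$ over holomorphic $\psi:\mathbb D\to D$ and $\lambda_j\in\mathbb D$ with $\psi(0)=z$, $\psi(\lambda_j)=p_j$; and $c_D(z;p_1,\dots,p_N)=\sup\{\log|F(z)|: F:D\to\mathbb D\text{ holomorphic}, F(p_j)=0\ \forall j\}$. *)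

theory Defs
  imports "HOL-Analysis.Analysis" "HOL-Library.Extended_Real"
begin

definition unit_disc :: "complex set" where "unit_disc = ball 0 1"
definition bidisc :: "(complex \<times> complex) set" where "bidisc = unit_disc \<times> unit_disc"

definition moeb :: "complex \<Rightarrow> complex \<Rightarrow> real" where
  "moeb a b = cmod ((a - b) / (1 - cnj a * b))"

definition elog :: "real \<Rightarrow> ereal" where
  "elog x = (if x = 0 then -\<infinity> else ereal (ln x))"

definition holo2_on :: "(complex \<times> complex \<Rightarrow> complex) \<Rightarrow> (complex \<times> complex) set \<Rightarrow> bool" where
  "holo2_on F S \<longleftrightarrow> (\<forall>z\<in>S. \<exists>a b. (F has_derivative (\<lambda>(u,v). a * u + b * v)) (at z))"

text \<open>Lempert function l_{D^2}((0,0); p, q): infimum over analytic discs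
  psi = (psi1, psi2) : D \<rightarrow> D^2 with psi 0 = (0,0), psi la1 = p, psi la2 = q.\<close>
definition lemp :: "complex \<times> complex \<Rightarrow> complex \<times> complex \<Rightarrow> ereal" where
  "lemp p q = Inf {elog (cmod la1) + elog (cmod la2) | la1 la2 psi1 psi2.
      psi1 holomorphic_on unit_disc \<and> psi2 holomorphic_on unit_disc \<and>
      psi1 ` unit_disc \<subseteq> unit_disc \<and> psi2 ` unit_disc \<subseteq> unit_disc \<and>
      psi1 0 = 0 \<and> psi2 0 = 0 \<and> la1 \<in> unit_disc \<and> la2 \<in> unit_disc \<and>
      (psi1 la1, psi2 la1) = p \<and> (psi1 la2, psi2 la2) = q}"

text \<open>Green (Caratheodory-type) function c_{D^2}((0,0); p, q).\<close>
definition cgreen :: "complex \<times> complex \<Rightarrow> complex \<times> complex \<Rightarrow> ereal" where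
  "cgreen p q = Sup {elog (cmod (F (0,0))) | F.
      holo2_on F bidisc \<and> F ` bidisc \<subseteq> unit_disc \<and> F p = 0 \<and> F q = 0}"

definition Uset :: "((complex \<times> complex) \<times> (complex \<times> complex)) set" where
  "Uset = {(p, q). p \<in> bidisc \<and> q \<in> bidisc \<and>
      cmod (snd p) < cmod (fst p) \<and> cmod (snd q) < cmod (fst q) \<and>
      moeb (snd p / fst p) (snd q / fst q) < moeb (fst p) (fst q)}"

definition swap_pair :: "(complex \<times> complex) \<times> (complex \<times> complex) \<Rightarrow> (complex \<times> complex) \<times> (complex \<times> complex)" where
  "swap_pair pq = ((snd (fst pq), fst (fst pq)), (snd (snd pq), fst (snd pq)))"

end

theory Submission
  imports Defs "HOL-Complex_Analysis.Complex_Analysis"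
begin

text \<open>For \<open>(p, q) \<in> U\<close> the Schwarz--Pick lemma yields a self-map \<open>\<phi>\<close> of the disc with
  \<open>\<phi>(p\<^sub>1) = p\<^sub>2/p\<^sub>1\<close> and \<open>\<phi>(q\<^sub>1) = q\<^sub>2/q\<^sub>1\<close>, so \<open>p\<close> and \<open>q\<close> lie on the analytic disc
  \<open>z \<mapsto> (z, z \<phi>(z))\<close> through the origin, at the parameters \<open>p\<^sub>1\<close> and \<open>q\<^sub>1\<close>; hence
  \<open>l(p, q) \<le> log |p\<^sub>1 q\<^sub>1|\<close>. The Blaschke product of the first coordinate vanishing at
  \<open>p\<^sub>1\<close> and \<open>q\<^sub>1\<close> shows \<open>c(p, q) \<ge> log |p\<^sub>1 q\<^sub>1|\<close>, and \<open>c \<le> l\<close> holds in general by the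
  Schwarz lemma with two zeros. The case \<open>\<sigma>(U)\<close> follows because both functions are
  invariant under swapping the coordinates.\<close>

abbreviation mob :: "complex \<Rightarrow> complex \<Rightarrow> complex" where
  "mob w \<equiv> Moebius_function 0 w"

lemma mob_zero_iff:
  assumes "norm a < 1" "norm z < 1" shows "mob a z = 0 \<longleftrightarrow> z = a"
proof -
  have "norm (cnj a * z) < 1"
    using norm_mult_less[OF assms] by (simp add: norm_mult)
  then have "1 - cnj a * z \<noteq> 0" by auto
  then show ?thesis by (simp add: Moebius_function_simple)
qed

lemma mob_at_0: "mob a 0 = - a"
  by (simp add: Moebius_function_of_zero)

lemma mob_inverse:
  assumes "norm c < 1" "norm z < 1" shows "mob (-c) (mob c z) = z"
  using Moebius_function_compose[of "-c" c z] assms by simp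

lemma norm_mult_lt_1: "norm (x::complex) < 1 \<Longrightarrow> norm y < 1 \<Longrightarrow> norm (x * y) < 1"
  using norm_mult_less[of x 1 y 1] by simp

lemma moeb_eq_norm_mob: "moeb a b = norm (mob a b)"
  unfolding moeb_def Moebius_function_simple by (simp add: norm_divide norm_minus_commute)

lemma holomorphic_on_ball_compose_mob:
  assumes "f holomorphic_on ball 0 1" "norm c < 1"
  shows "(f \<circ> mob c) holomorphic_on ball 0 1"
  by (rule holomorphic_on_compose_gen[OF Moebius_function_holomorphic assms(1)])
     (use assms(2) Moebius_function_norm_lt_1 in auto)

lemma Schwarz_Pick_zero:
  assumes hf: "f holomorphic_on ball 0 1" and im: "f ` ball 0 1 \<subseteq> ball 0 1"
    and c: "norm c < 1" and fc: "f c = 0" and z: "norm z < 1"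
  shows "norm (f z) \<le> norm (mob c z)"
proof -
  define F where "F = f \<circ> mob (-c)"
  have "F holomorphic_on ball 0 1"
    unfolding F_def using holomorphic_on_ball_compose_mob[OF hf] c by simp
  moreover have "F 0 = 0" by (simp add: F_def mob_at_0 fc)
  moreover have "norm (F w) < 1" if "norm w < 1" for w
    using im Moebius_function_norm_lt_1[of "-c" w] c that by (auto simp: F_def image_subset_iff)
  moreover have "norm (mob c z) < 1" using Moebius_function_norm_lt_1 c z by blast
  ultimately have "norm (F (mob c z)) \<le> norm (mob c z)"
    by (rule Schwarz_Lemma(1))
  moreover have "F (mob c z) = f z" using mob_inverse[OF c z] by (simp add: F_def)
  ultimately show ?thesis by simp
qed

text \<open>If \<open>k(z) = z g(z)\<close> has a second zero \<open>b \<noteq> 0\<close>, then \<open>k\<close> is not a rotation, so the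
  equality case of the Schwarz lemma is excluded and \<open>|g| < 1\<close>.\<close>
lemma Schwarz_divide_zero:
  assumes hk: "k holomorphic_on ball 0 1" and im: "k ` ball 0 1 \<subseteq> ball 0 1"
    and k0: "k 0 = 0" and b: "norm b < 1" and b0: "b \<noteq> 0" and kb: "k b = 0"
  obtains g where "g holomorphic_on ball 0 1" "g ` ball 0 1 \<subseteq> ball 0 1"
    "\<And>z. norm z < 1 \<Longrightarrow> k z = z * g z" "g b = 0"
proof -
  have kno: "norm (k w) < 1" if "norm w < 1" for w using im that by (auto simp: image_subset_iff)
  obtain g where hg: "g holomorphic_on ball 0 1" and kg: "\<And>z. norm z < 1 \<Longrightarrow> k z = z * g z"
    and dk: "deriv k 0 = g 0"
    using Schwarz3[OF hk k0] by blast
  have g_le: "norm (g z) \<le> 1" if z: "norm z < 1" for z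
  proof (cases "z = 0")
    case True
    then show ?thesis using Schwarz_Lemma(2)[OF hk k0 kno, of 0] dk by simp
  next
    case False
    have "norm z * norm (g z) \<le> norm z * 1"
      using Schwarz_Lemma(1)[OF hk k0 kno z] kg[OF z] by (simp add: norm_mult)
    then show ?thesis using False by simp
  qed
  have g_lt: "norm (g z) < 1" if z: "norm z < 1" for z
  proof (rule ccontr)
    assume "\<not> norm (g z) < 1"
    then have g1: "norm (g z) = 1" using g_le[OF z] by simp
    have "(\<exists>z. norm z < 1 \<and> z \<noteq> 0 \<and> norm (k z) = norm z) \<or> norm (deriv k 0) = 1"
      using g1 dk kg[OF z] z by (cases "z = 0") (auto simp: norm_mult)
    then obtain \<alpha> where "\<forall>z. norm z < 1 \<longrightarrow> k z = \<alpha> * z" and "norm \<alpha> = 1"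
      using Schwarz_Lemma(3)[OF hk k0 kno, of 0] by auto
    then show False using kb b b0 by auto
  qed
  show thesis
  proof (rule that[OF hg _ kg])
    show "g ` ball 0 1 \<subseteq> ball 0 1" using g_lt by auto
    show "g b = 0" using kg[OF b] kb b0 by simp
  qed
qed

lemma Schwarz_two_zeros:
  assumes hh: "h holomorphic_on ball 0 1" and im: "h ` ball 0 1 \<subseteq> ball 0 1"
    and a: "norm a < 1" and b: "norm b < 1" and ab: "a \<noteq> b"
    and ha: "h a = 0" and hb: "h b = 0"
  shows "norm (h 0) \<le> norm a * norm b"
proof -
  define k where "k = h \<circ> mob (-a)"
  obtain g where hg: "g holomorphic_on ball 0 1" and ig: "g ` ball 0 1 \<subseteq> ball 0 1"
    and kg: "\<And>z. norm z < 1 \<Longrightarrow> k z = z * g z" and gb: "g (mob a b) = 0"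
  proof (rule Schwarz_divide_zero)
    show "k holomorphic_on ball 0 1"
      unfolding k_def using holomorphic_on_ball_compose_mob[OF hh] a by simp
    show "k ` ball 0 1 \<subseteq> ball 0 1"
      using im Moebius_function_norm_lt_1[of "-a"] a by (auto simp: k_def)
    show "k 0 = 0" by (simp add: k_def mob_at_0 ha)
    show "norm (mob a b) < 1" using Moebius_function_norm_lt_1 a b by blast
    show "mob a b \<noteq> 0" using mob_zero_iff[OF a b] ab by auto
    show "k (mob a b) = 0" using mob_inverse[OF a b] hb by (simp add: k_def)
  qed (rule that)
  have "norm (g (mob a 0)) \<le> norm (mob b 0)"
  proof (rule Schwarz_Pick_zero[where f = "g \<circ> mob a", simplified])
    show "(g \<circ> mob a) holomorphic_on ball 0 1" using holomorphic_on_ball_compose_mob[OF hg a] .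
    show "(\<lambda>x. g (mob a x)) ` ball 0 1 \<subseteq> ball 0 1"
      using ig Moebius_function_norm_lt_1[OF a] by auto
  qed (use b gb in auto)
  moreover have "h 0 = (- a) * g (mob a 0)"
    using mob_inverse[OF a, of 0] kg[of "-a"] a by (simp add: k_def mob_at_0)
  ultimately show ?thesis by (simp add: mob_at_0 norm_mult mult_left_mono)
qed

lemma Schwarz_Pick_interpolation:
  assumes p1: "norm p1 < 1" and q1: "norm q1 < 1" and w1: "norm w1 < 1" and w2: "norm w2 < 1"
    and m: "moeb w1 w2 < moeb p1 q1"
  obtains \<phi> where "\<phi> holomorphic_on ball 0 1" "\<phi> ` ball 0 1 \<subseteq> ball 0 1"
    "\<phi> p1 = w1" "\<phi> q1 = w2"
proof -
  have "0 \<le> moeb w1 w2" by (simp add: moeb_def)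
  then have mpos: "0 < moeb p1 q1" using m by linarith
  then have mne: "mob p1 q1 \<noteq> 0" unfolding moeb_eq_norm_mob by auto
  define c where "c = mob w1 w2 / mob p1 q1"
  have c1: "norm c < 1" using m mpos by (simp add: c_def norm_divide moeb_eq_norm_mob)
  define \<phi> where "\<phi> = (\<lambda>z. mob (-w1) (c * mob p1 z))"
  have inner: "norm (c * mob p1 z) < 1" if "norm z < 1" for z
    using norm_mult_lt_1[OF c1 Moebius_function_norm_lt_1[OF p1 that]] .
  have "(\<lambda>z. c * mob p1 z) holomorphic_on ball 0 1"
    by (intro holomorphic_intros Moebius_function_holomorphic p1)
  then have "(mob (-w1) \<circ> (\<lambda>z. c * mob p1 z)) holomorphic_on ball 0 1"
    by (rule holomorphic_on_compose_gen[OF _ Moebius_function_holomorphic])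
       (use w1 inner in auto)
  then have "\<phi> holomorphic_on ball 0 1" by (simp add: \<phi>_def o_def)
  moreover have "\<phi> ` ball 0 1 \<subseteq> ball 0 1"
    using inner Moebius_function_norm_lt_1[of "-w1"] w1 by (auto simp: \<phi>_def)
  moreover have "\<phi> p1 = w1" by (simp add: \<phi>_def Moebius_function_eq_zero mob_at_0)
  moreover have "\<phi> q1 = w2" using mne mob_inverse[OF w1 w2] by (simp add: \<phi>_def c_def)
  ultimately show ?thesis using that by blast
qed

lemma Uset_on_analytic_graph:
  assumes "(p, q) \<in> Uset"
  obtains \<psi> where "\<psi> holomorphic_on ball 0 1" "\<psi> ` ball 0 1 \<subseteq> ball 0 1" "\<psi> 0 = 0"
    "\<psi> (fst p) = snd p" "\<psi> (fst q) = snd q"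
proof -
  obtain p1 p2 q1 q2 where pp: "p = (p1, p2)" and qq: "q = (q1, q2)" by (cases p, cases q)
  from assms have p1: "norm p1 < 1" and q1: "norm q1 < 1"
    and lp: "norm p2 < norm p1" and lq: "norm q2 < norm q1"
    and m: "moeb (p2/p1) (q2/q1) < moeb p1 q1"
    by (auto simp: Uset_def bidisc_def unit_disc_def pp qq)
  have nonzero: "p1 \<noteq> 0" "q1 \<noteq> 0" using lp lq by auto
  then have "norm (p2/p1) < 1" "norm (q2/q1) < 1" using lp lq by (simp_all add: norm_divide)
  then obtain \<phi> where "\<phi> holomorphic_on ball 0 1" "\<phi> ` ball 0 1 \<subseteq> ball 0 1"
    "\<phi> p1 = p2/p1" "\<phi> q1 = q2/q1"
    using Schwarz_Pick_interpolation[OF p1 q1 _ _ m] by blast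
  with nonzero show thesis
    by (intro that[of "\<lambda>z. z * \<phi> z"])
       (auto simp: pp qq image_subset_iff intro!: holomorphic_intros norm_mult_lt_1)
qed

lemma holomorphic_on_holo2_compose:
  assumes F: "holo2_on F bidisc"
    and f: "f holomorphic_on ball 0 1" "f ` ball 0 1 \<subseteq> ball 0 1"
    and g: "g holomorphic_on ball 0 1" "g ` ball 0 1 \<subseteq> ball 0 1"
  shows "(\<lambda>z. F (f z, g z)) holomorphic_on ball 0 1"
  unfolding holomorphic_on_def field_differentiable_def
proof
  fix z :: complex assume z: "z \<in> ball 0 1"
  obtain d e where d: "(f has_field_derivative d) (at z)" and e: "(g has_field_derivative e) (at z)"
    using f(1) g(1) z by (meson holomorphic_on_open open_ball)
  have "(f z, g z) \<in> bidisc"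
    using z f(2) g(2) by (auto simp: bidisc_def unit_disc_def image_subset_iff)
  then obtain a b where ab: "(F has_derivative (\<lambda>(u,v). a * u + b * v)) (at (f z, g z))"
    using F unfolding holo2_on_def by blast
  have "((\<lambda>t. (f t, g t)) has_derivative (\<lambda>t. (d * t, e * t))) (at z)"
    using d e by (intro has_derivative_Pair) (simp_all add: has_field_derivative_def)
  from diff_chain_at[OF this ab]
  have "((\<lambda>t. F (f t, g t)) has_derivative (\<lambda>t. (a * d + b * e) * t)) (at z)"
    by (simp add: o_def algebra_simps)
  then have "((\<lambda>t. F (f t, g t)) has_field_derivative (a * d + b * e)) (at z)"
    by (simp add: has_field_derivative_def)
  then show "\<exists>f'. ((\<lambda>t. F (f t, g t)) has_field_derivative f') (at z within ball 0 1)"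
    using has_field_derivative_at_within by blast
qed

lemma holo2_on_fst:
  assumes "f holomorphic_on ball 0 1"
  shows "holo2_on (\<lambda>z. f (fst z)) bidisc"
  unfolding holo2_on_def
proof
  fix z :: "complex \<times> complex" assume "z \<in> bidisc"
  then obtain d where "(f has_field_derivative d) (at (fst z))"
    using assms by (auto simp: bidisc_def unit_disc_def holomorphic_on_open)
  then have "((f \<circ> fst) has_derivative ((*) d \<circ> fst)) (at z)"
    by (intro diff_chain_at has_derivative_fst has_derivative_ident)
       (simp add: has_field_derivative_def)
  moreover have "(*) d \<circ> fst = (\<lambda>(u, v). d * u + 0 * v)" by auto
  ultimately have "((\<lambda>z. f (fst z)) has_derivative (\<lambda>(u, v). d * u + 0 * v)) (at z)"
    by (simp add: o_def)
  then show "\<exists>a b. ((\<lambda>z. f (fst z)) has_derivative (\<lambda>(u, v). a * u + b * v)) (at z)"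
    by blast
qed

lemma holo2_on_swap:
  assumes "holo2_on F bidisc"
  shows "holo2_on (F \<circ> prod.swap) bidisc"
  unfolding holo2_on_def
proof
  fix z :: "complex \<times> complex" assume "z \<in> bidisc"
  then have "prod.swap z \<in> bidisc" by (auto simp: bidisc_def)
  then obtain a b where "(F has_derivative (\<lambda>(u,v). a * u + b * v)) (at (prod.swap z))"
    using assms unfolding holo2_on_def by blast
  moreover have "(prod.swap has_derivative prod.swap) (at z)"
    using has_derivative_Pair[OF has_derivative_snd has_derivative_fst, OF has_derivative_ident has_derivative_ident]
    by (simp add: prod.swap_def[abs_def] case_prod_unfold)
  ultimately have "((F \<circ> prod.swap) has_derivative (\<lambda>(u, v). b * u + a * v)) (at z)"
    by (auto dest: diff_chain_at simp: o_def case_prod_unfold algebra_simps)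
  then show "\<exists>a b. ((F \<circ> prod.swap) has_derivative (\<lambda>(u,v). a * u + b * v)) (at z)" by blast
qed

lemma elog_mono: "0 \<le> x \<Longrightarrow> x \<le> y \<Longrightarrow> elog x \<le> elog y"
  by (simp add: elog_def)

lemma elog_mult: "0 \<le> x \<Longrightarrow> 0 \<le> y \<Longrightarrow> elog (x * y) = elog x + elog y"
  by (simp add: elog_def ln_mult)

lemma norm_at_0_le_along_disc:
  assumes F: "holo2_on F bidisc" "F ` bidisc \<subseteq> unit_disc"
    and \<psi>: "\<psi>1 holomorphic_on unit_disc" "\<psi>2 holomorphic_on unit_disc"
      "\<psi>1 ` unit_disc \<subseteq> unit_disc" "\<psi>2 ` unit_disc \<subseteq> unit_disc" "\<psi>1 0 = 0" "\<psi>2 0 = 0"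
    and la: "la1 \<in> unit_disc" "la2 \<in> unit_disc" "la1 \<noteq> la2"
    and zeros: "F (\<psi>1 la1, \<psi>2 la1) = 0" "F (\<psi>1 la2, \<psi>2 la2) = 0"
  shows "norm (F (0, 0)) \<le> norm la1 * norm la2"
proof -
  have "norm (F (\<psi>1 0, \<psi>2 0)) \<le> norm la1 * norm la2"
  proof (rule Schwarz_two_zeros[where h = "\<lambda>z. F (\<psi>1 z, \<psi>2 z)"])
    show "(\<lambda>z. F (\<psi>1 z, \<psi>2 z)) holomorphic_on ball 0 1"
      using \<psi> by (intro holomorphic_on_holo2_compose F(1)) (auto simp: unit_disc_def)
    show "(\<lambda>z. F (\<psi>1 z, \<psi>2 z)) ` ball 0 1 \<subseteq> ball 0 1"
      using F(2) \<psi> by (auto simp: unit_disc_def bidisc_def image_subset_iff)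
  qed (use la zeros in \<open>auto simp: unit_disc_def\<close>)
  then show ?thesis using \<psi> by simp
qed

lemma cgreen_le_lemp:
  assumes "p \<noteq> q" shows "cgreen p q \<le> lemp p q"
  unfolding cgreen_def lemp_def
  using assms by (intro Sup_least Inf_greatest, clarify)
    (metis elog_mult elog_mono norm_ge_zero zero_le_mult_iff norm_at_0_le_along_disc)

lemma lemp_le_on_graph:
  assumes "\<psi> holomorphic_on ball 0 1" "\<psi> ` ball 0 1 \<subseteq> ball 0 1" "\<psi> 0 = 0"
    and "norm p1 < 1" "norm q1 < 1"
  shows "lemp (p1, \<psi> p1) (q1, \<psi> q1) \<le> elog (norm p1) + elog (norm q1)"
  unfolding lemp_def unit_disc_def
  by (rule Inf_lower, rule CollectI, intro exI[of _ p1] exI[of _ q1] exI[of _ "\<lambda>z. z"] exI[of _ \<psi>])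
     (use assms in auto)

lemma cgreen_ge_Blaschke:
  assumes p1: "norm p1 < 1" and q1: "norm q1 < 1"
  shows "elog (norm p1) + elog (norm q1) \<le> cgreen (p1, p2) (q1, q2)"
proof -
  define F where "F = (\<lambda>z::complex \<times> complex. mob p1 (fst z) * mob q1 (fst z))"
  have "holo2_on F bidisc"
    unfolding F_def using p1 q1
    by (intro holo2_on_fst holomorphic_intros Moebius_function_holomorphic)
  moreover have "F ` bidisc \<subseteq> unit_disc"
    using Moebius_function_norm_lt_1[OF p1] Moebius_function_norm_lt_1[OF q1]
    by (auto simp: F_def bidisc_def unit_disc_def intro!: norm_mult_lt_1)
  moreover have "F (p1, p2) = 0" "F (q1, q2) = 0" by (simp_all add: F_def Moebius_function_eq_zero)
  moreover have "elog (norm p1) + elog (norm q1) = elog (norm (F (0, 0)))"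
    by (simp add: F_def mob_at_0 norm_mult elog_mult)
  ultimately show ?thesis
    unfolding cgreen_def by (intro Sup_upper) blast
qed

lemma cgreen_lemp_on_Uset:
  assumes U: "(p, q) \<in> Uset" and "p \<noteq> q"
  shows "cgreen p q = elog (norm (fst p)) + elog (norm (fst q))"
    and "lemp p q = elog (norm (fst p)) + elog (norm (fst q))"
proof -
  obtain \<psi> where \<psi>: "\<psi> holomorphic_on ball 0 1" "\<psi> ` ball 0 1 \<subseteq> ball 0 1" "\<psi> 0 = 0"
    and on_graph: "\<psi> (fst p) = snd p" "\<psi> (fst q) = snd q"
    using Uset_on_analytic_graph[OF U] .
  have disc: "norm (fst p) < 1" "norm (fst q) < 1"
    using U by (auto simp: Uset_def bidisc_def unit_disc_def)
  have "lemp p q \<le> elog (norm (fst p)) + elog (norm (fst q))"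
    using lemp_le_on_graph[OF \<psi> disc] on_graph by (simp add: prod_eq_iff)
  moreover have "elog (norm (fst p)) + elog (norm (fst q)) \<le> cgreen p q"
    using cgreen_ge_Blaschke[OF disc, of "snd p" "snd q"] by simp
  moreover have "cgreen p q \<le> lemp p q" using cgreen_le_lemp[OF \<open>p \<noteq> q\<close>] .
  ultimately show "cgreen p q = elog (norm (fst p)) + elog (norm (fst q))"
    and "lemp p q = elog (norm (fst p)) + elog (norm (fst q))" by simp_all
qed

lemma cgreen_swap: "cgreen (prod.swap p) (prod.swap q) = cgreen p q"
proof -
  have "cgreen p q \<le> cgreen (prod.swap p) (prod.swap q)" for p q
    unfolding cgreen_def
  proof (rule Sup_subset_mono, clarify)
    fix F assume "holo2_on F bidisc" "F ` bidisc \<subseteq> unit_disc" "F p = 0" "F q = 0"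
    then show "\<exists>G. elog (norm (F (0, 0))) = elog (norm (G (0, 0))) \<and> holo2_on G bidisc \<and>
      G ` bidisc \<subseteq> unit_disc \<and> G (prod.swap p) = 0 \<and> G (prod.swap q) = 0"
      using holo2_on_swap[of F] by (intro exI[of _ "F \<circ> prod.swap"]) (auto simp: bidisc_def)
  qed
  from this[of p q] this[of "prod.swap p" "prod.swap q"] show ?thesis by simp
qed

lemma lemp_swap: "lemp (prod.swap p) (prod.swap q) = lemp p q"
proof -
  have "lemp (prod.swap p) (prod.swap q) \<le> lemp p q" for p q
    unfolding lemp_def
    by (rule Inf_superset_mono) (clarsimp, blast)
  from this[of p q] this[of "prod.swap p" "prod.swap q"] show ?thesis by simp
qed

theorem mainTheorem5:
  fixes p q :: "complex \<times> complex"
  assumes "(p, q) \<in> Uset \<union> swap_pair ` Uset" and "p \<noteq> q"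
  shows "cgreen p q = lemp p q \<and>
    ((p, q) \<in> Uset \<longrightarrow>
       cgreen p q = ereal (ln (cmod (fst p) * cmod (fst q))) \<and>
       lemp p q = ereal (ln (cmod (fst p) * cmod (fst q))))"
proof -
  have nonzero: "fst p \<noteq> 0 \<and> fst q \<noteq> 0" if "(p, q) \<in> Uset"
    using that by (auto simp: Uset_def)
  have "cgreen p q = lemp p q"
  proof (cases "(p, q) \<in> Uset")
    case True
    then show ?thesis using cgreen_lemp_on_Uset[OF True assms(2)] by simp
  next
    case False
    then obtain p' q' where U: "(p', q') \<in> Uset"
      and swapped: "p = prod.swap p'" "q = prod.swap q'"
      using assms(1) by (auto simp: swap_pair_def)
    then have "p' \<noteq> q'" using assms(2) by auto
    then show ?thesis using cgreen_lemp_on_Uset[OF U] by (simp add: swapped cgreen_swap lemp_swap)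
  qed
  with cgreen_lemp_on_Uset[OF _ assms(2)] nonzero show ?thesis
    by (simp add: elog_def ln_mult)
qed

end
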